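(* Let $\mathcal{T}$ be a compact interval, $\boldsymbol{\phi}=(\phi_1,\dots,\phi_m)'$ linearly independent functions in $L^2(\mathcal{T})$, and $X(t)=\mathbf{a}'\boldsymbol{\phi}(t)$ a rank $m\in\mathbb{N}$ univariate stochastic process with random coefficient vector $\mathbf{a}\in\mathbb{R}^m$, mean $\mu$ and positive definite covariance kernel $\kappa$. Then: (i) $\mathbf{a}$ has a multivariate distribution with mean $\mathbf{m}_{\mathbf{a}}$ and covariance $\mathrm{Cov}(\mathbf{a})=\boldsymbol{\Sigma}$, symmetric positive definite, such that $\mathbf{m}_{\mathbf{a}}'\boldsymbol{\phi}(t)=\mu(t)$ and $\boldsymbol{\phi}'(s)\boldsymbol{\Sigma}\boldsymbol{\phi}(t)=\kappa(s,t)$ for all $s,t\in\mathcal{T}$; (ii) $\mathrm{fmd}^2(X;m)=(\mathbf{a}-\mathbf{m}_{\mathbf{a}})'\boldsymbol{\Sigma}^{-1}(\mathbf{a}-\mathbf{m}_{\mathbf{a}})$, the squared Mahalanobis distance of $\mathbf{a}$; (iii) if $X$ is a Gaussian process, then $\mathbf{a}\sim\mathcal{N}(\mathbf{m}_{\mathbf{a}},\boldsymbol{\Sigma})$.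
   Context: Rank $m$ means the covariance operator of $X$ has at most $m$ nonzero eigenvalues. $\mathrm{fmd}^2(X;m)=\sum_{i=1}^m\lambda_i^{-1}\langle X-\mu,\xi_i\rangle^2$, where $(\lambda_i,\xi_i)$ are the $m$ largest eigenpairs of the integral operator with kernel $\kappa$ and $\langle f,g\rangle=\int_{\mathcal{T}}fg$. A Gaussian process is one all of whose finite-dimensional marginals are jointly normal. *)

theory Defs
  imports "HOL-Probability.Probability"
begin

definition L2 :: "real set \<Rightarrow> (real \<Rightarrow> real) \<Rightarrow> bool" where
  "L2 T f \<longleftrightarrow> set_borel_measurable lborel T f \<and> set_integrable lborel T (\<lambda>t. (f t)\<^sup>2)"

definition ipL2 :: "real set \<Rightarrow> (real \<Rightarrow> real) \<Rightarrow> (real \<Rightarrow> real) \<Rightarrow> real" where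
  "ipL2 T f g = (LINT t:T|lborel. f t * g t)"

definition L2_lin_indep :: "real set \<Rightarrow> ('m::finite \<Rightarrow> real \<Rightarrow> real) \<Rightarrow> bool" where
  "L2_lin_indep T \<phi> \<longleftrightarrow>
     (\<forall>c :: 'm \<Rightarrow> real. (AE t in lborel. t \<in> T \<longrightarrow> (\<Sum>i\<in>UNIV. c i * \<phi> i t) = 0) \<longrightarrow> c = (\<lambda>_. 0))"

definition int_op :: "real set \<Rightarrow> (real \<Rightarrow> real \<Rightarrow> real) \<Rightarrow> (real \<Rightarrow> real) \<Rightarrow> real \<Rightarrow> real" where
  "int_op T k f = (\<lambda>s. LINT t:T|lborel. k s t * f t)"

definition is_eigenpair :: "real set \<Rightarrow> (real \<Rightarrow> real \<Rightarrow> real) \<Rightarrow> real \<Rightarrow> (real \<Rightarrow> real) \<Rightarrow> bool" where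
  "is_eigenpair T k l f \<longleftrightarrow> L2 T f \<and> \<not> (AE t in lborel. t \<in> T \<longrightarrow> f t = 0) \<and>
     (AE s in lborel. s \<in> T \<longrightarrow> int_op T k f s = l * f s)"

text \<open>(lam i, xi i), i ranging over the m-element type 'm, are the m largest eigenpairs:
  orthonormal eigenfunctions, and every eigenpair whose eigenfunction is orthogonal to all of
  them has eigenvalue no larger than any of the lam i.\<close>
definition top_eigenpairs :: "real set \<Rightarrow> (real \<Rightarrow> real \<Rightarrow> real) \<Rightarrow> ('m::finite \<Rightarrow> real) \<Rightarrow> ('m \<Rightarrow> real \<Rightarrow> real) \<Rightarrow> bool" where
  "top_eigenpairs T k lam xi \<longleftrightarrow>
     (\<forall>i. is_eigenpair T k (lam i) (xi i)) \<and>
     (\<forall>i j. ipL2 T (xi i) (xi j) = (if i = j then 1 else 0)) \<and>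
     (\<forall>l g. is_eigenpair T k l g \<and> (\<forall>i. ipL2 T g (xi i) = 0) \<longrightarrow> (\<forall>i. l \<le> lam i))"

definition fmd2 :: "real set \<Rightarrow> (real \<Rightarrow> real) \<Rightarrow> ('m::finite \<Rightarrow> real) \<Rightarrow> ('m \<Rightarrow> real \<Rightarrow> real) \<Rightarrow> (real \<Rightarrow> real) \<Rightarrow> real" where
  "fmd2 T \<mu> lam xi x = (\<Sum>i\<in>UNIV. inverse (lam i) * (ipL2 T (\<lambda>t. x t - \<mu> t) (xi i))\<^sup>2)"

definition normal_rv :: "'w measure \<Rightarrow> ('w \<Rightarrow> real) \<Rightarrow> real \<Rightarrow> real \<Rightarrow> bool" where
  "normal_rv M Y mu v \<longleftrightarrow>
     (v = 0 \<and> Y \<in> borel_measurable M \<and> (AE w in M. Y w = mu)) \<or>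
     (v > 0 \<and> distributed M lborel Y (normal_density mu (sqrt v)))"

definition mv_normal :: "'w measure \<Rightarrow> ('w \<Rightarrow> real^'m) \<Rightarrow> real^'m \<Rightarrow> real^'m^'m \<Rightarrow> bool" where
  "mv_normal M Y mu S \<longleftrightarrow>
     (\<forall>c :: real^'m. normal_rv M (\<lambda>w. c \<bullet> Y w) (c \<bullet> mu) (c \<bullet> (S *v c)))"

text \<open>Gaussian process on T: all finite-dimensional marginals are jointly normal, i.e. every
  finite linear combination of values X(t), t in T, is (possibly degenerate) normal.\<close>
definition gaussian_process :: "'w measure \<Rightarrow> real set \<Rightarrow> ('w \<Rightarrow> real \<Rightarrow> real) \<Rightarrow> bool" where
  "gaussian_process M T X \<longleftrightarrow>
     (\<forall>S c. finite S \<and> S \<subseteq> T \<longrightarrow> (\<exists>mu v. normal_rv M (\<lambda>w. \<Sum>t\<in>S. c t * X w t) mu v))"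

end

theory Submission
  imports Defs
begin

text \<open>Because the \<phi> i are linearly independent, the vectors (\<phi> 1 t, ..., \<phi> m t) for t \<in> T
  span \<real>^m, so every linear functional c \<bullet> a is a finite linear combination of values X t. This
  transfers second moments and Gaussianity from X to a and expresses \<mu> and \<kappa> through the mean
  and the covariance matrix \<Sigma> of a. On the span of the \<phi> i the covariance operator acts on
  coefficient vectors by c \<mapsto> \<Sigma> G c, where G is the Gram matrix of the \<phi> i; this map is
  self-adjoint and positive for the inner product given by G. Hence, if one of the m largest
  eigenvalues vanished, fewer than m eigenfunctions would lie in that span and the map would
  have a further eigenvector there, with positive eigenvalue, contradicting maximality. So all
  \<lambda> i are positive, the coefficient vectors y i = (\<langle>\<phi> 1, \<xi> i\<rangle>, ..., \<langle>\<phi> m, \<xi> i\<rangle>) satisfy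
  y i \<bullet> \<Sigma> y j = \<lambda> i \<delta>(i,j), and this basis diagonalises the inverse of \<Sigma>, which turns the
  functional Mahalanobis distance of X into the Mahalanobis distance of a.\<close>

definition square_integrable :: "'a measure \<Rightarrow> ('a \<Rightarrow> real) \<Rightarrow> bool" where
  "square_integrable M f \<longleftrightarrow> f \<in> borel_measurable M \<and> integrable M (\<lambda>x. (f x)\<^sup>2)"

lemma integrable_mult_if_square_integrable:
  assumes "square_integrable M f" "square_integrable M g"
  shows "integrable M (\<lambda>x. f x * g x)"
proof (rule Bochner_Integration.integrable_bound)
  show "integrable M (\<lambda>x. (f x)\<^sup>2 + (g x)\<^sup>2)" "(\<lambda>x. f x * g x) \<in> borel_measurable M"
    using assms unfolding square_integrable_def by auto
  have "\<bar>f x\<bar> * \<bar>g x\<bar> \<le> (f x)\<^sup>2 + (g x)\<^sup>2" for x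
  proof -
    have "2 * (\<bar>f x\<bar> * \<bar>g x\<bar>) \<le> (f x)\<^sup>2 + (g x)\<^sup>2"
      using sum_squares_bound[of "\<bar>f x\<bar>" "\<bar>g x\<bar>"] by (simp add: mult.assoc)
    moreover have "0 \<le> \<bar>f x\<bar> * \<bar>g x\<bar>"
      by simp
    ultimately show ?thesis
      by linarith
  qed
  then show "AE x in M. norm (f x * g x) \<le> norm ((f x)\<^sup>2 + (g x)\<^sup>2)"
    by (simp add: abs_mult)
qed

lemma square_integrable_add:
  assumes "square_integrable M f" "square_integrable M g"
  shows "square_integrable M (\<lambda>x. f x + g x)"
proof -
  have "(\<lambda>x. (f x + g x)\<^sup>2) = (\<lambda>x. (f x)\<^sup>2 + (g x)\<^sup>2 + 2 * (f x * g x))"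
    by (simp add: power2_sum mult.assoc)
  then show ?thesis
    using integrable_mult_if_square_integrable[OF assms] assms
    unfolding square_integrable_def by auto
qed

lemma square_integrable_cmult:
  "square_integrable M f \<Longrightarrow> square_integrable M (\<lambda>x. c * f x)"
  unfolding square_integrable_def by (simp add: power_mult_distrib borel_measurable_times)

lemma square_integrable_sum:
  "finite I \<Longrightarrow> (\<And>i. i \<in> I \<Longrightarrow> square_integrable M (f i)) \<Longrightarrow>
    square_integrable M (\<lambda>x. \<Sum>i\<in>I. f i x)"
proof (induction I rule: finite_induct)
  case empty
  then show ?case by (simp add: square_integrable_def)
next
  case (insert i I)
  then show ?case by (simp add: square_integrable_add)
qed

lemma (in finite_measure) square_integrable_const: "square_integrable M (\<lambda>x. c)"
  unfolding square_integrable_def by simp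

lemma (in finite_measure) integrable_if_square_integrable:
  "square_integrable M f \<Longrightarrow> integrable M f"
  unfolding square_integrable_def by (blast intro: square_integrable_imp_integrable)

subsection \<open>Symmetric and positive definite matrices\<close>

lemma symmetric_matrix_inner:
  fixes A :: "real^'n^'n"
  assumes "transpose A = A"
  shows "x \<bullet> (A *v y) = (A *v x) \<bullet> y"
  by (metis assms dot_lmul_matrix transpose_matrix_vector)

lemma matrix_inv_invertible:
  assumes "invertible A"
  shows "A ** matrix_inv A = mat 1" "matrix_inv A ** A = mat 1"
  using someI_ex[OF assms[unfolded invertible_def]] unfolding matrix_inv_def by auto

lemma invertible_if_pos_def:
  fixes A :: "real^'n^'n"
  assumes "\<And>x. x \<noteq> 0 \<Longrightarrow> x \<bullet> (A *v x) > 0"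
  shows "invertible A"
  unfolding invertible_left_inverse matrix_left_invertible_ker
  using assms by (metis inner_zero_right less_irrefl)

lemma nonpos_if_quadratic_nonpos:
  fixes b c :: real
  assumes "\<And>t. 2 * t * b + t\<^sup>2 * c \<le> 0"
  shows "b \<le> 0"
proof (rule ccontr)
  assume "\<not> b \<le> 0"
  define t where "t = b / (\<bar>c\<bar> + 1)"
  have "t * (\<bar>c\<bar> + 1) = b"
    by (simp add: t_def add_pos_nonneg)
  have "t\<^sup>2 * \<bar>c\<bar> + t\<^sup>2 = t * (t * (\<bar>c\<bar> + 1))"
    by (simp add: power2_eq_square algebra_simps)
  also have "\<dots> = t * b"
    using \<open>t * (\<bar>c\<bar> + 1) = b\<close> by simp
  finally have "t\<^sup>2 * \<bar>c\<bar> + t\<^sup>2 = t * b" .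
  moreover have "- (t\<^sup>2 * \<bar>c\<bar>) \<le> t\<^sup>2 * c"
    using mult_left_mono[of "- \<bar>c\<bar>" c "t\<^sup>2"] by simp
  moreover have "t * b > 0"
    using \<open>\<not> b \<le> 0\<close> by (simp add: t_def add_pos_nonneg)
  moreover have "t\<^sup>2 \<ge> 0"
    by simp
  ultimately have "2 * (t * b) + t\<^sup>2 * c > 0"
    by linarith
  with assms[of t] show False
    by (simp add: mult.assoc)
qed

lemma rayleigh_quotient_attains_max:
  fixes G H :: "real^'n^'n"
  assumes G_pos: "\<And>x. x \<noteq> 0 \<Longrightarrow> x \<bullet> (G *v x) > 0"
    and V: "subspace V" "c0 \<in> V" "c0 \<noteq> 0"
  obtains c l where "c \<in> V" "c \<noteq> 0" "c \<bullet> (H *v c) = l * (c \<bullet> (G *v c))"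
    "\<And>u. u \<in> V \<Longrightarrow> u \<bullet> (H *v u) \<le> l * (u \<bullet> (G *v u))"
proof -
  define R where "R u = (u \<bullet> (H *v u)) / (u \<bullet> (G *v u))" for u :: "real^'n"
  define K where "K = sphere 0 1 \<inter> V"
  have "compact K"
    unfolding K_def by (intro compact_Int_closed compact_sphere closed_subspace V)
  moreover have "c0 /\<^sub>R norm c0 \<in> K"
    unfolding K_def using V by (simp add: subspace_scale)
  moreover have "continuous_on K R"
    unfolding R_def
  proof (intro continuous_on_divide continuous_on_inner continuous_on_id
      matrix_vector_mult_linear_continuous_on[THEN continuous_on_compose2])
    show "\<forall>u\<in>K. u \<bullet> (G *v u) \<noteq> 0"
    proof
      fix u
      assume "u \<in> K"
      then have "u \<noteq> 0" by (auto simp: K_def)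
      then show "u \<bullet> (G *v u) \<noteq> 0" using G_pos[of u] by simp
    qed
  qed auto
  ultimately obtain c where c: "c \<in> K" and c_max: "\<And>u. u \<in> K \<Longrightarrow> R u \<le> R c"
    using continuous_attains_sup[of K R] by blast
  have "u \<bullet> (H *v u) \<le> R c * (u \<bullet> (G *v u))" if "u \<in> V" for u
  proof (cases "u = 0")
    case False
    have "R u = R (u /\<^sub>R norm u)"
      using False by (simp add: R_def matrix_vector_mult_scaleR)
    also have "\<dots> \<le> R c"
      using False \<open>u \<in> V\<close> V(1) by (intro c_max) (simp add: K_def subspace_scale)
    finally show ?thesis
      using G_pos[OF False] by (simp add: R_def pos_divide_le_eq mult.commute)
  qed simp
  moreover have "c \<noteq> 0" using c by (auto simp: K_def)
  ultimately show thesis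
    using that[of c "R c"] c G_pos[of c] by (simp add: K_def R_def)
qed

text \<open>Along w = A c - l c the Rayleigh inequality at c + t w becomes a quadratic in t whose
  linear coefficient is 2 w \<bullet> G w; it can stay nonpositive only if w = 0.\<close>

lemma rayleigh_maximiser_is_eigenvector:
  fixes G A :: "real^'n^'n"
  assumes G_sym: "transpose G = G" and G_pos: "\<And>x. x \<noteq> 0 \<Longrightarrow> x \<bullet> (G *v x) > 0"
    and GA_sym: "transpose (G ** A) = G ** A"
    and V: "subspace V" and A_V: "\<And>u. u \<in> V \<Longrightarrow> A *v u \<in> V"
    and c: "c \<in> V" "c \<bullet> ((G ** A) *v c) = l * (c \<bullet> (G *v c))"
    and c_max: "\<And>u. u \<in> V \<Longrightarrow> u \<bullet> ((G ** A) *v u) \<le> l * (u \<bullet> (G *v u))"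
  shows "A *v c = l *\<^sub>R c"
proof -
  define B where "B = G ** A"
  define w where "w = A *v c - l *\<^sub>R c"
  have "w \<in> V"
    unfolding w_def using V c A_V by (simp add: subspace_diff subspace_scale)
  have cross: "c \<bullet> (B *v w) - l * (c \<bullet> (G *v w)) = w \<bullet> (G *v w)"
  proof -
    have "c \<bullet> (B *v w) = (G *v (A *v c)) \<bullet> w"
      using symmetric_matrix_inner[OF GA_sym] by (simp add: B_def matrix_vector_mul_assoc)
    also have "\<dots> = (A *v c) \<bullet> (G *v w)"
      using symmetric_matrix_inner[OF G_sym] by simp
    finally show ?thesis
      by (simp add: w_def inner_diff_left)
  qed
  have "2 * t * (w \<bullet> (G *v w)) + t\<^sup>2 * (w \<bullet> (B *v w) - l * (w \<bullet> (G *v w))) \<le> 0" for t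
  proof -
    have "c + t *\<^sub>R w \<in> V"
      using V c \<open>w \<in> V\<close> by (simp add: subspace_add subspace_scale)
    then have "(c + t *\<^sub>R w) \<bullet> (B *v (c + t *\<^sub>R w)) \<le> l * ((c + t *\<^sub>R w) \<bullet> (G *v (c + t *\<^sub>R w)))"
      using c_max by (simp add: B_def)
    moreover have "w \<bullet> (B *v c) = c \<bullet> (B *v w)" "w \<bullet> (G *v c) = c \<bullet> (G *v w)"
      using symmetric_matrix_inner[OF GA_sym, of w c] symmetric_matrix_inner[OF G_sym, of w c]
      by (simp_all add: B_def inner_commute)
    ultimately show ?thesis
      using c(2) cross
      by (simp add: B_def matrix_vector_right_distrib matrix_vector_mult_scaleR inner_add_left
          inner_add_right power2_eq_square algebra_simps)
  qed
  then have "w \<bullet> (G *v w) \<le> 0"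
    by (rule nonpos_if_quadratic_nonpos)
  then have "w = 0"
    using G_pos by force
  then show ?thesis by (simp add: w_def)
qed

lemma invariant_subspace_has_eigenvector:
  fixes G A :: "real^'n^'n"
  assumes "transpose G = G" "\<And>x. x \<noteq> 0 \<Longrightarrow> x \<bullet> (G *v x) > 0"
    and "transpose (G ** A) = G ** A"
    and "subspace V" "c0 \<in> V" "c0 \<noteq> 0" "\<And>u. u \<in> V \<Longrightarrow> A *v u \<in> V"
  obtains c l where "c \<in> V" "c \<noteq> 0" "A *v c = l *\<^sub>R c"
proof -
  obtain c l where "c \<in> V" "c \<noteq> 0" "c \<bullet> ((G ** A) *v c) = l * (c \<bullet> (G *v c))"
    "\<And>u. u \<in> V \<Longrightarrow> u \<bullet> ((G ** A) *v u) \<le> l * (u \<bullet> (G *v u))"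
    using rayleigh_quotient_attains_max[OF assms(2,4-6)] by blast
  with rayleigh_maximiser_is_eigenvector[OF assms(1-4,7)] that show thesis by blast
qed

lemma nonzero_orthogonal_if_some_zero:
  fixes y :: "'n::finite \<Rightarrow> real^'n"
  assumes "y k = 0"
  obtains c where "c \<noteq> 0" "\<And>i. c \<bullet> y i = 0"
proof -
  have "range y \<subseteq> insert 0 (y ` (UNIV - {k}))"
    using assms by auto
  then have "span (range y) \<subseteq> span (y ` (UNIV - {k}))"
    by (metis span_insert_0 span_mono)
  moreover have "span (y ` (UNIV - {k})) \<noteq> UNIV"
  proof
    assume "span (y ` (UNIV - {k})) = UNIV"
    then have "CARD('n) \<le> card (y ` (UNIV - {k}))"
      using dim_eq_full[of "y ` (UNIV - {k})"] dim_le_card'[of "y ` (UNIV - {k})"] by simp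
    also have "\<dots> \<le> card (UNIV - {k})"
      by (rule card_image_le) simp
    also have "\<dots> = CARD('n) - 1"
      by (simp add: card_Diff_singleton)
    finally show False
      using zero_less_card_finite[where 'a='n] by linarith
  qed
  ultimately obtain c where "c \<noteq> 0" "\<And>x. x \<in> span (range y) \<Longrightarrow> c \<bullet> x = 0"
    using span_not_UNIV_orthogonal by (metis top.extremum_unique)
  with that show thesis by (meson rangeI span_base)
qed

lemma inner_matrix_inv_diagonalised:
  fixes S :: "real^'n^'n" and y :: "'n \<Rightarrow> real^'n"
  assumes S_sym: "transpose S = S" and "invertible S"
    and diag: "\<And>i j. y i \<bullet> (S *v y j) = (if i = j then lam i else 0)"
    and lam: "\<And>i. lam i \<noteq> 0"
  shows "d \<bullet> (matrix_inv S *v d) = (\<Sum>j\<in>UNIV. inverse (lam j) * (d \<bullet> y j)\<^sup>2)"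
proof -
  define C :: "real^'n^'n" where "C = (\<chi> i. inverse (lam i) *\<^sub>R (S *v y i))"
  define Y :: "real^'n^'n" where "Y = (\<chi> k j. y j $ k)"
  have C_row: "C $ i \<bullet> v = inverse (lam i) * (y i \<bullet> (S *v v))" for i v
    using symmetric_matrix_inner[OF S_sym, of "y i" v] by (simp add: C_def)
  have "(C ** Y) $ i $ j = C $ i \<bullet> y j" for i j
    by (simp add: matrix_matrix_mult_def Y_def inner_vec_def)
  then have "C ** Y = mat 1"
    using C_row diag lam by (simp add: vec_eq_iff mat_def)
  then have "Y ** C = mat 1"
    by (simp add: matrix_left_right_inverse)
  define z where "z = matrix_inv S *v d"
  have "S *v z = d"
    using matrix_inv_invertible[OF \<open>invertible S\<close>] by (simp add: z_def matrix_vector_mul_assoc)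
  have "d \<bullet> z = d \<bullet> (Y *v (C *v z))"
    using \<open>Y ** C = mat 1\<close> by (simp add: matrix_vector_mul_assoc)
  also have "\<dots> = (\<Sum>j\<in>UNIV. (C $ j \<bullet> z) * (d \<bullet> y j))"
  proof -
    have "Y *v v = (\<Sum>j\<in>UNIV. v $ j *\<^sub>R y j)" for v
      by (simp add: matrix_mult_sum column_def Y_def scalar_mult_eq_scaleR)
    moreover have "(C *v z) $ j = C $ j \<bullet> z" for j
      by (simp add: matrix_vector_mult_def inner_vec_def mult.commute)
    ultimately show ?thesis
      by (simp add: inner_sum_right)
  qed
  also have "\<dots> = (\<Sum>j\<in>UNIV. inverse (lam j) * (d \<bullet> y j)\<^sup>2)"
    using C_row \<open>S *v z = d\<close> by (simp add: inner_commute power2_eq_square mult.assoc)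
  finally show ?thesis by (simp add: z_def)
qed

lemma L2_iff_square_integrable:
  "L2 T f \<longleftrightarrow> square_integrable lborel (\<lambda>t. indicator T t * f t)"
proof -
  have sq: "(\<lambda>t. (indicator T t * f t)\<^sup>2) = (\<lambda>t. indicator T t * (f t)\<^sup>2)"
    by (auto simp: indicator_def)
  show ?thesis
    unfolding L2_def square_integrable_def set_borel_measurable_def set_integrable_def
      real_scaleR_def sq ..
qed

lemma set_integrable_mult_if_L2:
  assumes "L2 T f" "L2 T g"
  shows "set_integrable lborel T (\<lambda>t. f t * g t)"
proof -
  have "integrable lborel (\<lambda>t. (indicator T t * f t) * (indicator T t * g t))"
    using assms by (intro integrable_mult_if_square_integrable) (simp_all add: L2_iff_square_integrable)
  moreover have "(\<lambda>t. (indicator T t * f t) * (indicator T t * g t)) =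
      (\<lambda>t. indicator T t *\<^sub>R (f t * g t))"
    by (auto simp: indicator_def)
  ultimately show ?thesis
    by (simp add: set_integrable_def)
qed

lemma L2_cmult:
  assumes "L2 T f"
  shows "L2 T (\<lambda>t. c * f t)"
proof -
  have "square_integrable lborel (\<lambda>t. c * (indicator T t * f t))"
    using assms by (intro square_integrable_cmult) (simp add: L2_iff_square_integrable)
  moreover have "(\<lambda>t. c * (indicator T t * f t)) = (\<lambda>t. indicator T t * (c * f t))"
    by (simp add: algebra_simps)
  ultimately show ?thesis
    by (simp add: L2_iff_square_integrable)
qed

lemma L2_sum:
  assumes "finite I" "\<And>i. i \<in> I \<Longrightarrow> L2 T (f i)"
  shows "L2 T (\<lambda>t. \<Sum>i\<in>I. c i * f i t)"
proof -
  have "square_integrable lborel (\<lambda>t. \<Sum>i\<in>I. c i * (indicator T t * f i t))"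
    using assms
    by (intro square_integrable_sum square_integrable_cmult) (simp_all add: L2_iff_square_integrable)
  moreover have "(\<lambda>t. \<Sum>i\<in>I. c i * (indicator T t * f i t)) =
      (\<lambda>t. indicator T t * (\<Sum>i\<in>I. c i * f i t))"
    by (simp add: sum_distrib_left algebra_simps)
  ultimately show ?thesis
    by (simp add: L2_iff_square_integrable)
qed

lemma ipL2_commute: "ipL2 T f g = ipL2 T g f"
  unfolding ipL2_def by (simp add: mult.commute)

lemma ipL2_cmult_right: "ipL2 T f (\<lambda>t. c * g t) = c * ipL2 T f g"
  unfolding ipL2_def set_lebesgue_integral_def
  by (simp add: mult.left_commute)

lemma ipL2_cong:
  assumes "\<And>t. t \<in> T \<Longrightarrow> f t = f' t" "\<And>t. t \<in> T \<Longrightarrow> g t = g' t"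
  shows "ipL2 T f g = ipL2 T f' g'"
proof -
  have "(\<lambda>t. indicator T t *\<^sub>R (f t * g t)) = (\<lambda>t. indicator T t *\<^sub>R (f' t * g' t))"
  proof
    show "indicator T t *\<^sub>R (f t * g t) = indicator T t *\<^sub>R (f' t * g' t)" for t
      using assms by (cases "t \<in> T") simp_all
  qed
  then show ?thesis
    unfolding ipL2_def set_lebesgue_integral_def by (simp only:)
qed

lemma ipL2_cong_AE:
  assumes "set_integrable lborel T (\<lambda>t. f t * g t)" "set_integrable lborel T (\<lambda>t. f' t * g t)"
    and "AE t in lborel. t \<in> T \<longrightarrow> f t = f' t"
  shows "ipL2 T f g = ipL2 T f' g"
  unfolding ipL2_def set_lebesgue_integral_def
  using assms borel_measurable_integrable unfolding set_integrable_def
  by (intro integral_cong_AE) (auto elim!: eventually_mono simp: indicator_def)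

lemma ipL2_sum_left:
  assumes "finite I" "\<And>j. j \<in> I \<Longrightarrow> set_integrable lborel T (\<lambda>t. f j t * g t)"
  shows "ipL2 T (\<lambda>t. \<Sum>j\<in>I. r j * f j t) g = (\<Sum>j\<in>I. r j * ipL2 T (f j) g)"
proof -
  have "ipL2 T (\<lambda>t. \<Sum>j\<in>I. r j * f j t) g =
      (\<integral>t. (\<Sum>j\<in>I. r j * (indicator T t *\<^sub>R (f j t * g t))) \<partial>lborel)"
    unfolding ipL2_def set_lebesgue_integral_def
    by (simp add: sum_distrib_left sum_distrib_right mult.left_commute mult.assoc)
  also have "\<dots> = (\<Sum>j\<in>I. r j * ipL2 T (f j) g)"
    using assms unfolding ipL2_def set_lebesgue_integral_def set_integrable_def
    by (simp add: Bochner_Integration.integral_sum)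
  finally show ?thesis .
qed

lemma ipL2_self_nonneg: "ipL2 T f f \<ge> 0"
  unfolding ipL2_def set_lebesgue_integral_def
  by (intro integral_nonneg_AE) (simp add: indicator_def)

lemma ipL2_self_eq_0_imp_AE:
  assumes "L2 T f" "ipL2 T f f = 0"
  shows "AE t in lborel. t \<in> T \<longrightarrow> f t = 0"
proof -
  have "AE t in lborel. indicator T t *\<^sub>R (f t * f t) = 0"
    using assms set_integrable_mult_if_L2[OF assms(1,1)]
    unfolding ipL2_def set_lebesgue_integral_def set_integrable_def
    by (subst integral_nonneg_eq_0_iff_AE[symmetric]) (auto simp: indicator_def)
  then show ?thesis
    by (auto elim!: eventually_mono simp: indicator_def)
qed

lemma (in prob_space) normal_rv_parameters:
  assumes "normal_rv M Y mu v"
  shows "mu = expectation Y" "v = expectation (\<lambda>w. (Y w - expectation Y)\<^sup>2)"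
proof -
  have "mu = expectation Y \<and> v = expectation (\<lambda>w. (Y w - expectation Y)\<^sup>2)"
  proof (cases "v = 0")
    case True
    then have Y: "Y \<in> borel_measurable M" "AE w in M. Y w = mu"
      using assms by (auto simp: normal_rv_def)
    then have "expectation Y = mu"
      using integral_cong_AE[of Y M "\<lambda>_. mu"] by (simp add: prob_space)
    moreover have "expectation (\<lambda>w. (Y w - mu)\<^sup>2) = 0"
      using Y integral_cong_AE[of "\<lambda>w. (Y w - mu)\<^sup>2" M "\<lambda>_. 0"] by simp
    ultimately show ?thesis using True by simp
  next
    case False
    then have "0 < sqrt v" and Y: "distributed M lborel Y (normal_density mu (sqrt v))"
      using assms by (auto simp: normal_rv_def)
    then have "expectation Y = mu" "expectation (\<lambda>w. (Y w - expectation Y)\<^sup>2) = (sqrt v)\<^sup>2"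
      using normal_distributed_expectation normal_distributed_variance by blast+
    then show ?thesis
      using \<open>0 < sqrt v\<close> by simp
  qed
  then show "mu = expectation Y" "v = expectation (\<lambda>w. (Y w - expectation Y)\<^sup>2)"
    by simp_all
qed

subsection \<open>Moments of the coefficient vector\<close>

locale finite_rank_process = prob_space M for M :: "'w measure" +
  fixes T :: "real set" and \<phi> :: "'m::finite \<Rightarrow> real \<Rightarrow> real"
    and a :: "'w \<Rightarrow> real^'m" and X :: "'w \<Rightarrow> real \<Rightarrow> real"
    and \<mu> :: "real \<Rightarrow> real" and \<kappa> :: "real \<Rightarrow> real \<Rightarrow> real"
  assumes phi_lin_indep: "L2_lin_indep T \<phi>"
    and a_measurable: "a \<in> borel_measurable M"
    and X_eq: "\<And>w t. X w t = (\<Sum>i\<in>UNIV. a w $ i * \<phi> i t)"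
    and X_square_integrable: "\<And>t. t \<in> T \<Longrightarrow> integrable M (\<lambda>w. (X w t)\<^sup>2)"
    and mean_eq: "\<And>t. t \<in> T \<Longrightarrow> \<mu> t = expectation (\<lambda>w. X w t)"
    and cov_eq: "\<And>s t. s \<in> T \<Longrightarrow> t \<in> T \<Longrightarrow>
      \<kappa> s t = expectation (\<lambda>w. (X w s - \<mu> s) * (X w t - \<mu> t))"
begin

definition phi_vec :: "real \<Rightarrow> real^'m" where
  "phi_vec t = (\<chi> i. \<phi> i t)"

definition phi_comb :: "real^'m \<Rightarrow> real \<Rightarrow> real" where
  "phi_comb c = (\<lambda>t. \<Sum>i\<in>UNIV. c $ i * \<phi> i t)"

lemma phi_comb_eq_inner: "phi_comb c t = c \<bullet> phi_vec t"
  by (simp add: phi_comb_def phi_vec_def inner_vec_def)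

lemma phi_comb_scaleR: "phi_comb (k *\<^sub>R c) t = k * phi_comb c t"
  by (simp add: phi_comb_eq_inner)

lemma X_eq_inner: "X w t = a w \<bullet> phi_vec t"
  using X_eq phi_comb_eq_inner by (simp add: phi_comb_def)

lemma phi_comb_AE_zero_imp_zero:
  assumes "AE t in lborel. t \<in> T \<longrightarrow> phi_comb c t = 0"
  shows "c = 0"
proof -
  have "(\<lambda>i. c $ i) = (\<lambda>_. 0)"
    using phi_lin_indep assms unfolding L2_lin_indep_def phi_comb_def by blast
  then show ?thesis by (simp add: vec_eq_iff fun_eq_iff)
qed

lemma span_phi_vec: "span (phi_vec ` T) = UNIV"
proof (rule ccontr)
  assume "span (phi_vec ` T) \<noteq> UNIV"
  then obtain c where "c \<noteq> 0" and c: "\<And>x. x \<in> span (phi_vec ` T) \<Longrightarrow> c \<bullet> x = 0"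
    using span_not_UNIV_orthogonal by blast
  then have "\<And>t. t \<in> T \<Longrightarrow> phi_comb c t = 0"
    by (simp add: phi_comb_eq_inner span_base)
  then have "c = 0"
    by (intro phi_comb_AE_zero_imp_zero) simp
  with \<open>c \<noteq> 0\<close> show False ..
qed

lemma inner_a_eq_sum_X:
  obtains U u where "finite U" "U \<subseteq> T" "\<And>w. v \<bullet> a w = (\<Sum>t\<in>U. u t * X w t)"
proof -
  have "v \<in> span (phi_vec ` T)"
    using span_phi_vec by simp
  then obtain S r where S: "finite S" "S \<subseteq> phi_vec ` T" and v: "v = (\<Sum>x\<in>S. r x *\<^sub>R x)"
    unfolding span_explicit by blast
  obtain U where U: "U \<subseteq> T" "inj_on phi_vec U" "S = phi_vec ` U"
    using S(2) unfolding subset_image_inj by blast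
  have "v \<bullet> a w = (\<Sum>t\<in>U. r (phi_vec t) * (phi_vec t \<bullet> a w))" for w
    by (simp add: v U(3) sum.reindex[OF U(2)] inner_sum_left)
  then have "v \<bullet> a w = (\<Sum>t\<in>U. r (phi_vec t) * X w t)" for w
    by (simp add: X_eq_inner inner_commute)
  moreover have "finite U"
    using S(1) U(2,3) by (simp add: finite_image_iff)
  ultimately show thesis
    using U(1) by (intro that[of U "\<lambda>t. r (phi_vec t)"])
qed

lemma square_integrable_inner_a: "square_integrable M (\<lambda>w. v \<bullet> a w)"
proof -
  obtain U u where "finite U" "U \<subseteq> T" and v: "\<And>w. v \<bullet> a w = (\<Sum>t\<in>U. u t * X w t)"
    using inner_a_eq_sum_X[where v=v] by blast
  moreover have "square_integrable M (\<lambda>w. X w t)" if "t \<in> T" for t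
    using X_square_integrable[OF that] a_measurable
    by (simp add: square_integrable_def X_eq_inner)
  ultimately show ?thesis
    by (simp add: square_integrable_sum square_integrable_cmult subset_iff)
qed

lemma square_integrable_a: "square_integrable M (\<lambda>w. a w $ i)"
  using square_integrable_inner_a[of "axis i 1"] by (simp add: inner_axis')

definition mean_a :: "real^'m" where
  "mean_a = (\<chi> i. expectation (\<lambda>w. a w $ i))"

definition cov_a :: "real^'m^'m" where
  "cov_a = (\<chi> i j. expectation (\<lambda>w. (a w $ i - mean_a $ i) * (a w $ j - mean_a $ j)))"

lemma expectation_inner_a: "expectation (\<lambda>w. v \<bullet> a w) = v \<bullet> mean_a"
  using integrable_if_square_integrable[OF square_integrable_a]
  by (simp add: inner_vec_def mean_a_def Bochner_Integration.integral_sum)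

lemma expectation_inner_centered_mult:
  "expectation (\<lambda>w. (u \<bullet> (a w - mean_a)) * (v \<bullet> (a w - mean_a))) = u \<bullet> (cov_a *v v)"
proof -
  define D where "D i w = a w $ i - mean_a $ i" for i w
  have D: "square_integrable M (D i)" for i
    unfolding D_def
    using square_integrable_add[OF square_integrable_a square_integrable_const[of "- mean_a $ i"]]
    by simp
  have "expectation (\<lambda>w. (u \<bullet> (a w - mean_a)) * (v \<bullet> (a w - mean_a))) =
      expectation (\<lambda>w. \<Sum>i\<in>UNIV. \<Sum>j\<in>UNIV. u $ i * v $ j * (D i w * D j w))"
    by (simp add: D_def inner_vec_def sum_product ac_simps)
  also have "\<dots> = (\<Sum>i\<in>UNIV. \<Sum>j\<in>UNIV. u $ i * v $ j * expectation (\<lambda>w. D i w * D j w))"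
    using integrable_mult_if_square_integrable[OF D D]
    by (simp add: Bochner_Integration.integral_sum Bochner_Integration.integrable_sum)
  also have "\<dots> = u \<bullet> (cov_a *v v)"
    by (simp add: cov_a_def D_def inner_vec_def matrix_vector_mult_def sum_distrib_left ac_simps)
  finally show ?thesis .
qed

lemma cov_a_symmetric: "transpose cov_a = cov_a"
  by (simp add: transpose_def cov_a_def vec_eq_iff mult.commute)

lemma mean_a_phi_vec: "t \<in> T \<Longrightarrow> mean_a \<bullet> phi_vec t = \<mu> t"
  using mean_eq expectation_inner_a[of "phi_vec t"] by (simp add: X_eq_inner inner_commute)

lemma X_minus_mean: "t \<in> T \<Longrightarrow> X w t - \<mu> t = phi_comb (a w - mean_a) t"
  using mean_a_phi_vec by (simp add: X_eq_inner phi_comb_eq_inner inner_diff_left)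

lemma cov_a_phi_vec:
  "s \<in> T \<Longrightarrow> t \<in> T \<Longrightarrow> phi_vec s \<bullet> (cov_a *v phi_vec t) = \<kappa> s t"
  using cov_eq expectation_inner_centered_mult[of "phi_vec s" "phi_vec t"]
  by (simp add: X_minus_mean phi_comb_eq_inner inner_commute)

lemma mv_normal_if_gaussian_process:
  assumes "gaussian_process M T X"
  shows "mv_normal M a mean_a cov_a"
  unfolding mv_normal_def
proof
  fix c :: "real^'m"
  obtain U u where "finite U" "U \<subseteq> T" and c: "\<And>w. c \<bullet> a w = (\<Sum>t\<in>U. u t * X w t)"
    using inner_a_eq_sum_X[where v=c] by blast
  then have "\<exists>mu v. normal_rv M (\<lambda>w. \<Sum>t\<in>U. u t * X w t) mu v"
    using assms unfolding gaussian_process_def by blast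
  then obtain mu v where normal: "normal_rv M (\<lambda>w. c \<bullet> a w) mu v"
    unfolding c by blast
  have centered: "(\<lambda>w. (c \<bullet> a w - c \<bullet> mean_a)\<^sup>2) =
      (\<lambda>w. (c \<bullet> (a w - mean_a)) * (c \<bullet> (a w - mean_a)))"
    by (simp add: inner_diff_right power2_eq_square)
  have "mu = c \<bullet> mean_a"
    using normal_rv_parameters(1)[OF normal] expectation_inner_a by simp
  moreover have "v = c \<bullet> (cov_a *v c)"
    using normal_rv_parameters(2)[OF normal] expectation_inner_centered_mult[of c c] centered
    by (simp add: expectation_inner_a)
  ultimately show "normal_rv M (\<lambda>w. c \<bullet> a w) (c \<bullet> mean_a) (c \<bullet> (cov_a *v c))"
    using normal by simp
qed

end

subsection \<open>The covariance operator on the span of the basis functions\<close>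

lemma L2_if_eigenpair: "is_eigenpair T k l f \<Longrightarrow> L2 T f"
  by (simp add: is_eigenpair_def)

lemma
  assumes "top_eigenpairs T k lam \<xi>"
  shows top_eigenpairs_eigenpair: "is_eigenpair T k (lam i) (\<xi> i)"
    and top_eigenpairs_orthonormal: "ipL2 T (\<xi> i) (\<xi> j) = (if i = j then 1 else 0)"
    and top_eigenpairs_maximal:
      "is_eigenpair T k l g \<Longrightarrow> (\<And>i. ipL2 T g (\<xi> i) = 0) \<Longrightarrow> l \<le> lam i"
  using assms unfolding top_eigenpairs_def by blast+

locale finite_rank_process_L2 = finite_rank_process M T \<phi> a X \<mu> \<kappa>
  for M :: "'w measure" and T and \<phi> :: "'m::finite \<Rightarrow> real \<Rightarrow> real" and a X \<mu> \<kappa> +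
  assumes phi_L2: "\<And>i. L2 T (\<phi> i)"
    and kappa_pos_def: "\<And>c. c \<noteq> 0 \<Longrightarrow> ipL2 T (phi_comb c) (int_op T \<kappa> (phi_comb c)) > 0"
begin

definition phi_coeffs :: "(real \<Rightarrow> real) \<Rightarrow> real^'m" where
  "phi_coeffs f = (\<chi> j. ipL2 T (\<phi> j) f)"

definition gram :: "real^'m^'m" where
  "gram = (\<chi> i j. ipL2 T (\<phi> i) (\<phi> j))"

lemma gram_symmetric: "transpose gram = gram"
  by (simp add: transpose_def gram_def vec_eq_iff ipL2_commute)

lemma L2_phi_comb: "L2 T (phi_comb c)"
  unfolding phi_comb_def by (intro L2_sum phi_L2) simp

lemma ipL2_phi_comb_left: "L2 T f \<Longrightarrow> ipL2 T (phi_comb c) f = c \<bullet> phi_coeffs f"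
  unfolding phi_comb_def
  by (simp add: ipL2_sum_left set_integrable_mult_if_L2 phi_L2 inner_vec_def phi_coeffs_def)

lemma ipL2_AE_phi_comb_left:
  assumes "L2 T f" "AE t in lborel. t \<in> T \<longrightarrow> f t = phi_comb c t" "L2 T g"
  shows "ipL2 T f g = c \<bullet> phi_coeffs g"
  using ipL2_cong_AE[OF set_integrable_mult_if_L2[OF assms(1,3)]
      set_integrable_mult_if_L2[OF L2_phi_comb assms(3)] assms(2)]
  by (simp add: ipL2_phi_comb_left assms(3))

lemma inner_phi_coeffs_phi: "c \<bullet> phi_coeffs (\<phi> i) = (gram *v c) $ i"
  by (simp add: inner_vec_def phi_coeffs_def gram_def matrix_vector_mult_def mult.commute
      ipL2_commute)

lemma phi_coeffs_AE_phi_comb: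
  assumes "L2 T f" "AE t in lborel. t \<in> T \<longrightarrow> f t = phi_comb c t"
  shows "phi_coeffs f = gram *v c"
proof -
  have "phi_coeffs f $ i = (gram *v c) $ i" for i
  proof -
    have "phi_coeffs f $ i = ipL2 T f (\<phi> i)"
      by (simp add: phi_coeffs_def ipL2_commute[of T "\<phi> i" f])
    also have "\<dots> = c \<bullet> phi_coeffs (\<phi> i)"
      by (rule ipL2_AE_phi_comb_left[OF assms phi_L2])
    finally show ?thesis
      by (simp add: inner_phi_coeffs_phi)
  qed
  then show ?thesis
    by (simp add: vec_eq_iff)
qed

lemma phi_coeffs_phi_comb: "phi_coeffs (phi_comb c) = gram *v c"
  by (rule phi_coeffs_AE_phi_comb) (simp_all add: L2_phi_comb)

lemma ipL2_phi_comb_phi_comb: "ipL2 T (phi_comb u) (phi_comb v) = u \<bullet> (gram *v v)"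
  by (simp add: ipL2_phi_comb_left L2_phi_comb phi_coeffs_phi_comb)

lemma gram_pos_def:
  assumes "x \<noteq> 0"
  shows "x \<bullet> (gram *v x) > 0"
proof -
  have "ipL2 T (phi_comb x) (phi_comb x) \<noteq> 0"
    using ipL2_self_eq_0_imp_AE[OF L2_phi_comb] phi_comb_AE_zero_imp_zero assms by blast
  then show ?thesis
    using ipL2_self_nonneg[of T "phi_comb x"] by (simp add: ipL2_phi_comb_phi_comb)
qed

lemma int_op_eq_phi_comb:
  assumes "L2 T f" "s \<in> T"
  shows "int_op T \<kappa> f s = phi_comb (cov_a *v phi_coeffs f) s"
proof -
  have "int_op T \<kappa> f s = ipL2 T (\<kappa> s) f"
    by (simp add: int_op_def ipL2_def)
  also have "\<dots> = ipL2 T (phi_comb (cov_a *v phi_vec s)) f"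
    using cov_a_phi_vec[OF \<open>s \<in> T\<close>] symmetric_matrix_inner[OF cov_a_symmetric]
    by (intro ipL2_cong) (simp_all add: phi_comb_eq_inner)
  also have "\<dots> = phi_vec s \<bullet> (cov_a *v phi_coeffs f)"
    using symmetric_matrix_inner[OF cov_a_symmetric] by (simp add: ipL2_phi_comb_left assms(1))
  finally show ?thesis
    by (simp add: phi_comb_eq_inner inner_commute)
qed

lemma cov_a_pos_def:
  assumes "x \<noteq> 0"
  shows "x \<bullet> (cov_a *v x) > 0"
proof -
  define c where "c = matrix_inv gram *v x"
  have x: "x = gram *v c"
    using matrix_inv_invertible(1)[OF invertible_if_pos_def[OF gram_pos_def]]
    by (simp add: c_def matrix_vector_mul_assoc)
  with assms have "c \<noteq> 0" by auto
  have "ipL2 T (phi_comb c) (int_op T \<kappa> (phi_comb c)) =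
      ipL2 T (phi_comb c) (phi_comb (cov_a *v (gram *v c)))"
    by (intro ipL2_cong) (simp_all add: int_op_eq_phi_comb L2_phi_comb phi_coeffs_phi_comb)
  also have "\<dots> = x \<bullet> (cov_a *v x)"
    using symmetric_matrix_inner[OF gram_symmetric] by (simp add: ipL2_phi_comb_phi_comb x)
  finally show ?thesis
    using kappa_pos_def[OF \<open>c \<noteq> 0\<close>] by simp
qed

lemma invertible_cov_a: "invertible cov_a"
  by (intro invertible_if_pos_def cov_a_pos_def)

lemma eigenpair_AE_eq_phi_comb:
  "is_eigenpair T \<kappa> l f \<Longrightarrow> AE t in lborel. t \<in> T \<longrightarrow> l * f t = phi_comb (cov_a *v phi_coeffs f) t"
  unfolding is_eigenpair_def by (auto elim!: eventually_mono simp: int_op_eq_phi_comb)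

lemma eigenpair_phi_coeffs:
  assumes "is_eigenpair T \<kappa> l f"
  shows "gram *v (cov_a *v phi_coeffs f) = l *\<^sub>R phi_coeffs f"
proof -
  have "phi_coeffs (\<lambda>t. l * f t) = gram *v (cov_a *v phi_coeffs f)"
    by (intro phi_coeffs_AE_phi_comb L2_cmult L2_if_eigenpair[OF assms] eigenpair_AE_eq_phi_comb assms)
  moreover have "phi_coeffs (\<lambda>t. l * f t) = l *\<^sub>R phi_coeffs f"
    by (simp add: phi_coeffs_def vec_eq_iff ipL2_cmult_right)
  ultimately show ?thesis by simp
qed

lemma eigenpair_if_eigenvector:
  assumes "c \<noteq> 0" and eig: "(cov_a ** gram) *v c = l *\<^sub>R c"
  shows "l > 0" "is_eigenpair T \<kappa> l (phi_comb c)"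
proof -
  have Sc: "cov_a *v (gram *v c) = l *\<^sub>R c"
    using eig by (simp add: matrix_vector_mul_assoc)
  have "gram *v c \<noteq> 0"
    using gram_pos_def[OF \<open>c \<noteq> 0\<close>] by auto
  then have "0 < (gram *v c) \<bullet> (cov_a *v (gram *v c))"
    by (rule cov_a_pos_def)
  also have "\<dots> = l * (c \<bullet> (gram *v c))"
    by (simp add: Sc inner_commute)
  finally show "l > 0"
    using gram_pos_def[OF \<open>c \<noteq> 0\<close>] by (simp add: zero_less_mult_iff)
  have "int_op T \<kappa> (phi_comb c) s = l * phi_comb c s" if "s \<in> T" for s
    using that by (simp add: int_op_eq_phi_comb L2_phi_comb phi_coeffs_phi_comb Sc phi_comb_scaleR)
  then show "is_eigenpair T \<kappa> l (phi_comb c)"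
    using phi_comb_AE_zero_imp_zero \<open>c \<noteq> 0\<close> by (auto simp: is_eigenpair_def L2_phi_comb)
qed

lemma top_eigenvalue_nonzero:
  fixes lam :: "'m \<Rightarrow> real"
  assumes top: "top_eigenpairs T \<kappa> lam \<xi>"
  shows "lam k \<noteq> 0"
proof
  assume "lam k = 0"
  define y where "y i = phi_coeffs (\<xi> i)" for i
  have y_eig: "gram *v (cov_a *v y i) = lam i *\<^sub>R y i" for i
    unfolding y_def by (rule eigenpair_phi_coeffs[OF top_eigenpairs_eigenpair[OF top]])
  have "gram *v (cov_a *v y k) = 0"
    using y_eig[of k] \<open>lam k = 0\<close> by simp
  then have "cov_a *v y k = 0"
    using gram_pos_def[of "cov_a *v y k"] by force
  then have "y k = 0"
    using cov_a_pos_def[of "y k"] by force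
  then obtain c0 where "c0 \<noteq> 0" and c0: "\<And>i. c0 \<bullet> y i = 0"
    using nonzero_orthogonal_if_some_zero[where y=y and k=k] by blast
  define V where "V = {c. \<forall>i. c \<bullet> y i = 0}"
  have "subspace V"
    by (auto simp: V_def subspace_def inner_add_left)
  have "c0 \<in> V"
    using c0 by (simp add: V_def)
  have invariant: "(cov_a ** gram) *v c \<in> V" if "c \<in> V" for c
  proof -
    have "((cov_a ** gram) *v c) \<bullet> y i = 0" for i
    proof -
      have "((cov_a ** gram) *v c) \<bullet> y i = (gram *v c) \<bullet> (cov_a *v y i)"
        using symmetric_matrix_inner[OF cov_a_symmetric, of "gram *v c" "y i"]
        by (simp add: matrix_vector_mul_assoc)
      also have "\<dots> = c \<bullet> (gram *v (cov_a *v y i))"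
        using symmetric_matrix_inner[OF gram_symmetric, of c "cov_a *v y i"] by simp
      also have "\<dots> = 0"
        using that by (simp add: y_eig V_def)
      finally show ?thesis .
    qed
    then show ?thesis by (simp add: V_def)
  qed
  have "transpose (gram ** (cov_a ** gram)) = gram ** (cov_a ** gram)"
    by (simp add: matrix_transpose_mul gram_symmetric cov_a_symmetric matrix_mul_assoc)
  then obtain c l where "c \<in> V" "c \<noteq> 0" and eig: "(cov_a ** gram) *v c = l *\<^sub>R c"
    using invariant_subspace_has_eigenvector[OF gram_symmetric gram_pos_def _ \<open>subspace V\<close>
        \<open>c0 \<in> V\<close> \<open>c0 \<noteq> 0\<close> invariant] by blast
  have "ipL2 T (phi_comb c) (\<xi> i) = 0" for i
    using \<open>c \<in> V\<close> L2_if_eigenpair[OF top_eigenpairs_eigenpair[OF top]]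
    by (simp add: ipL2_phi_comb_left V_def y_def)
  then have "l \<le> lam k"
    by (rule top_eigenpairs_maximal[OF top eigenpair_if_eigenvector(2)[OF \<open>c \<noteq> 0\<close> eig]])
  with eigenpair_if_eigenvector(1)[OF \<open>c \<noteq> 0\<close> eig] \<open>lam k = 0\<close> show False
    by simp
qed

lemma top_eigenpairs_cov_a_diagonal:
  fixes lam :: "'m \<Rightarrow> real"
  assumes top: "top_eigenpairs T \<kappa> lam \<xi>"
  shows "phi_coeffs (\<xi> i) \<bullet> (cov_a *v phi_coeffs (\<xi> j)) = (if i = j then lam i else 0)"
proof -
  have eig: "is_eigenpair T \<kappa> (lam j) (\<xi> j)"
    by (rule top_eigenpairs_eigenpair[OF top])
  have "(cov_a *v phi_coeffs (\<xi> j)) \<bullet> phi_coeffs (\<xi> i) = ipL2 T (\<lambda>t. lam j * \<xi> j t) (\<xi> i)"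
    using top_eigenpairs_eigenpair[OF top]
    by (intro ipL2_AE_phi_comb_left[symmetric] L2_cmult L2_if_eigenpair eigenpair_AE_eq_phi_comb eig)
  also have "\<dots> = lam j * ipL2 T (\<xi> i) (\<xi> j)"
    by (simp only: ipL2_commute[of T "\<lambda>t. lam j * \<xi> j t" "\<xi> i"] ipL2_cmult_right)
  finally show ?thesis
    by (simp add: top_eigenpairs_orthonormal[OF top] inner_commute)
qed

lemma fmd2_eq_mahalanobis:
  fixes lam :: "'m \<Rightarrow> real"
  assumes top: "top_eigenpairs T \<kappa> lam \<xi>"
  shows "fmd2 T \<mu> lam \<xi> (X w) = (a w - mean_a) \<bullet> (matrix_inv cov_a *v (a w - mean_a))"
proof -
  have "ipL2 T (\<lambda>t. X w t - \<mu> t) (\<xi> j) = (a w - mean_a) \<bullet> phi_coeffs (\<xi> j)" for j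
  proof -
    have "ipL2 T (\<lambda>t. X w t - \<mu> t) (\<xi> j) = ipL2 T (phi_comb (a w - mean_a)) (\<xi> j)"
      by (rule ipL2_cong) (simp_all add: X_minus_mean)
    also have "\<dots> = (a w - mean_a) \<bullet> phi_coeffs (\<xi> j)"
      by (rule ipL2_phi_comb_left[OF L2_if_eigenpair[OF top_eigenpairs_eigenpair[OF top]]])
    finally show ?thesis .
  qed
  then have "fmd2 T \<mu> lam \<xi> (X w) =
      (\<Sum>j\<in>UNIV. inverse (lam j) * ((a w - mean_a) \<bullet> phi_coeffs (\<xi> j))\<^sup>2)"
    by (simp only: fmd2_def)
  also have "\<dots> = (a w - mean_a) \<bullet> (matrix_inv cov_a *v (a w - mean_a))"
    by (rule inner_matrix_inv_diagonalised[symmetric, OF cov_a_symmetric invertible_cov_a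
          top_eigenpairs_cov_a_diagonal[OF top] top_eigenvalue_nonzero[OF top]])
  finally show ?thesis .
qed
end

theorem corollary3:
  fixes M :: "'w measure" and lo hi :: real
    and \<phi> :: "'m::finite \<Rightarrow> real \<Rightarrow> real"
    and a :: "'w \<Rightarrow> real^'m"
    and X :: "'w \<Rightarrow> real \<Rightarrow> real"
    and \<mu> :: "real \<Rightarrow> real" and \<kappa> :: "real \<Rightarrow> real \<Rightarrow> real"
  assumes "prob_space M"
    and "lo < hi"
    and phi_L2: "\<forall>i. L2 {lo..hi} (\<phi> i)"
    and phi_indep: "L2_lin_indep {lo..hi} \<phi>"
    and a_meas: "a \<in> borel_measurable M"
    and X_def: "\<forall>w t. X w t = (\<Sum>i\<in>UNIV. a w $ i * \<phi> i t)"
    and X_sq: "\<forall>t\<in>{lo..hi}. integrable M (\<lambda>w. (X w t)\<^sup>2)"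
    and mean: "\<forall>t\<in>{lo..hi}. \<mu> t = (\<integral>w. X w t \<partial>M)"
    and cov: "\<forall>s\<in>{lo..hi}. \<forall>t\<in>{lo..hi}.
                \<kappa> s t = (\<integral>w. (X w s - \<mu> s) * (X w t - \<mu> t) \<partial>M)"
    and kappa_pd: "\<forall>c :: 'm \<Rightarrow> real. c \<noteq> (\<lambda>_. 0) \<longrightarrow>
                ipL2 {lo..hi} (\<lambda>s. \<Sum>i\<in>UNIV. c i * \<phi> i s)
                  (int_op {lo..hi} \<kappa> (\<lambda>t. \<Sum>i\<in>UNIV. c i * \<phi> i t)) > 0"
  shows "\<exists>(ma :: real^'m) (\<Sigma> :: real^'m^'m).
      (\<forall>i. integrable M (\<lambda>w. (a w $ i)\<^sup>2)) \<and>
      (\<forall>i. ma $ i = (\<integral>w. a w $ i \<partial>M)) \<and>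
      (\<forall>i j. \<Sigma> $ i $ j = (\<integral>w. (a w $ i - ma $ i) * (a w $ j - ma $ j) \<partial>M)) \<and>
      transpose \<Sigma> = \<Sigma> \<and>
      (\<forall>x. x \<noteq> 0 \<longrightarrow> x \<bullet> (\<Sigma> *v x) > 0) \<and>
      (\<forall>t\<in>{lo..hi}. ma \<bullet> (\<chi> i. \<phi> i t) = \<mu> t) \<and>
      (\<forall>s\<in>{lo..hi}. \<forall>t\<in>{lo..hi}. (\<chi> i. \<phi> i s) \<bullet> (\<Sigma> *v (\<chi> i. \<phi> i t)) = \<kappa> s t) \<and>
      (\<forall>(lam :: 'm \<Rightarrow> real) xi. top_eigenpairs {lo..hi} \<kappa> lam xi \<longrightarrow>
         (\<forall>w\<in>space M. fmd2 {lo..hi} \<mu> lam xi (X w) =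
            (a w - ma) \<bullet> (matrix_inv \<Sigma> *v (a w - ma)))) \<and>
      (gaussian_process M {lo..hi} X \<longrightarrow> mv_normal M a ma \<Sigma>)"
proof -
  interpret finite_rank_process M "{lo..hi}" \<phi> a X \<mu> \<kappa>
  proof (intro finite_rank_process.intro finite_rank_process_axioms.intro)
    show "X w t = (\<Sum>i\<in>UNIV. a w $ i * \<phi> i t)" for w t
      using X_def by simp
  qed (use X_sq mean cov in \<open>simp_all add: assms(1) phi_indep a_meas\<close>)
  interpret finite_rank_process_L2 M "{lo..hi}" \<phi> a X \<mu> \<kappa>
  proof
    show "L2 {lo..hi} (\<phi> i)" for i
      using phi_L2 by simp
    show "ipL2 {lo..hi} (phi_comb c) (int_op {lo..hi} \<kappa> (phi_comb c)) > 0" if "c \<noteq> 0" for c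
      using kappa_pd that by (simp add: phi_comb_def vec_eq_iff fun_eq_iff)
  qed
  show ?thesis
  proof (intro exI[of _ mean_a] exI[of _ cov_a] conjI allI impI ballI)
    show "integrable M (\<lambda>w. (a w $ i)\<^sup>2)" for i
      using square_integrable_a by (simp add: square_integrable_def)
    show "mean_a $ i = (\<integral>w. a w $ i \<partial>M)" for i
      by (simp add: mean_a_def)
    show "cov_a $ i $ j = (\<integral>w. (a w $ i - mean_a $ i) * (a w $ j - mean_a $ j) \<partial>M)" for i j
      by (simp add: cov_a_def)
  qed (use cov_a_symmetric cov_a_pos_def mean_a_phi_vec cov_a_phi_vec fmd2_eq_mahalanobis
      mv_normal_if_gaussian_process in \<open>simp_all add: phi_vec_def\<close>)
qed

end
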